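(* Let $L$ be a Leibniz algebra over $F$ and $(l,r,V)$ a representation of $L$. Let $A$ be a subspace of $L$ and $x\in n_L(A)$. Then for every integer $k\ge 0$ and every $a\in A$: (i) $\delta_{k+1}:=r_a^{k+1}r_x-r_xr_a^{k+1}\in (r_A)^{k+1}$; (ii) $\beta_{k+1}:=r_x^{k+1}r_a-r_ar_x^{k+1}\in r_Ar_x^{k}+\cdots+r_Ar_x+r_A$.
   Context: $F$ is an algebraically closed field of characteristic zero; all spaces are finite-dimensional. A (right) Leibniz algebra is a vector space $L$ with bilinear bracket satisfying $[x,[y,z]]=[[x,y],z]-[[x,z],y]$. A representation $(l,r,V)$ of $L$ is a vector space $V$ with linear maps $l,r:L\to\mathrm{End}_F(V)$, $x\mapsto l_x,r_x$, such that $r_{[x,y]}=r_yr_x-r_xr_y$, $l_{[x,y]}=r_yl_x-l_xr_y$, $l_{[x,y]}=r_yl_x+l_xl_y$ (products are compositions). For a subspace $A\subseteq L$, $r_A=\{r_a:a\in A\}$ (a subspace of $\mathrm{End}_F(V)$); $(r_A)^p$ is the linear span of all compositions $r_{a_1}\cdots r_{a_p}$ with $a_i\in A$; $r_Ar_x^j=\{r_a r_x^j: a\in A\}$, with $r_x^0=\mathrm{id}_V$; $+$ denotes sum of subspaces. The normalizer of $A$ is $n_L(A)=\{y\in L: [y,a]\in A \text{ and } [a,y]\in A \text{ for all } a\in A\}$. *)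

theory Defs
  imports Main "HOL-Computational_Algebra.Polynomial"
begin

definition alg_closed_field :: "'k::field itself \<Rightarrow> bool" where
  "alg_closed_field _ \<longleftrightarrow> (\<forall>p::'k poly. degree p \<ge> 1 \<longrightarrow> (\<exists>z. poly p z = 0))"

definition fd_vector_space :: "('k::field \<Rightarrow> 'v::ab_group_add \<Rightarrow> 'v) \<Rightarrow> bool" where
  "fd_vector_space s \<longleftrightarrow> vector_space s \<and> (\<exists>B. finite B \<and> module.span s B = UNIV)"

text \<open>Right Leibniz algebra: bilinear bracket with [x,[y,z]] = [[x,y],z] - [[x,z],y].\<close>
definition leibniz_algebra ::
  "('k::field \<Rightarrow> 'l::ab_group_add \<Rightarrow> 'l) \<Rightarrow> ('l \<Rightarrow> 'l \<Rightarrow> 'l) \<Rightarrow> bool" where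
  "leibniz_algebra sL br \<longleftrightarrow> fd_vector_space sL
     \<and> (\<forall>z. Vector_Spaces.linear sL sL (\<lambda>x. br x z))
     \<and> (\<forall>z. Vector_Spaces.linear sL sL (br z))
     \<and> (\<forall>x y z. br x (br y z) = br (br x y) z - br (br x z) y)"

definition leibniz_rep ::
  "('k::field \<Rightarrow> 'l::ab_group_add \<Rightarrow> 'l) \<Rightarrow> ('l \<Rightarrow> 'l \<Rightarrow> 'l)
   \<Rightarrow> ('k \<Rightarrow> 'v::ab_group_add \<Rightarrow> 'v) \<Rightarrow> ('l \<Rightarrow> 'v \<Rightarrow> 'v) \<Rightarrow> ('l \<Rightarrow> 'v \<Rightarrow> 'v) \<Rightarrow> bool" where
  "leibniz_rep sL br sV l r \<longleftrightarrow> fd_vector_space sV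
     \<and> (\<forall>x. Vector_Spaces.linear sV sV (l x)) \<and> (\<forall>x. Vector_Spaces.linear sV sV (r x))
     \<and> (\<forall>v. Vector_Spaces.linear sL sV (\<lambda>x. l x v)) \<and> (\<forall>v. Vector_Spaces.linear sL sV (\<lambda>x. r x v))
     \<and> (\<forall>x y v. r (br x y) v = (r y \<circ> r x) v - (r x \<circ> r y) v)
     \<and> (\<forall>x y v. l (br x y) v = (r y \<circ> l x) v - (l x \<circ> r y) v)
     \<and> (\<forall>x y v. l (br x y) v = (r y \<circ> l x) v + (l x \<circ> l y) v)"

definition normalizer :: "('l \<Rightarrow> 'l \<Rightarrow> 'l) \<Rightarrow> 'l set \<Rightarrow> 'l set" where
  "normalizer br A = {y. \<forall>a\<in>A. br y a \<in> A \<and> br a y \<in> A}"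

definition end_span :: "('k::field \<Rightarrow> 'v::ab_group_add \<Rightarrow> 'v) \<Rightarrow> ('v \<Rightarrow> 'v) set \<Rightarrow> ('v \<Rightarrow> 'v) set" where
  "end_span sV S = {T. \<exists>n (c::nat \<Rightarrow> 'k) f. (\<forall>i<n. f i \<in> S) \<and> T = (\<lambda>v. \<Sum>i<n. sV (c i) (f i v))}"

definition rA_power :: "('k::field \<Rightarrow> 'v::ab_group_add \<Rightarrow> 'v) \<Rightarrow> ('l \<Rightarrow> 'v \<Rightarrow> 'v) \<Rightarrow> 'l set \<Rightarrow> nat \<Rightarrow> ('v \<Rightarrow> 'v) set" where
  "rA_power sV r A p = end_span sV {foldr (\<circ>) (map r as) id | as. length as = p \<and> set as \<subseteq> A}"

text \<open>r_A r_x^k + ... + r_A r_x + r_A (sum of subspaces).\<close>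
definition rA_rx_sum :: "('l \<Rightarrow> 'v::ab_group_add \<Rightarrow> 'v) \<Rightarrow> 'l set \<Rightarrow> 'l \<Rightarrow> nat \<Rightarrow> ('v \<Rightarrow> 'v) set" where
  "rA_rx_sum r A x k = {T. \<exists>as. (\<forall>j\<le>k. as j \<in> A) \<and> T = (\<lambda>v. \<Sum>j\<le>k. r (as j) ((r x ^^ j) v))}"

end

theory Submission
  imports Defs
begin

text \<open>Both parts are inductions on the exponent driven by the bracket rule
  r_[a,b] = r_b r_a - r_a r_b. For (i) this gives
  delta_(k+2)(a) = r_a delta_(k+1)(a) + r_[x,a] r_a^(k+1), and both summands are spans of
  words of length k+2 in r_A because [x,a] \<in> A. For (ii), r_x r_a = r_a r_x + r_[a,x] gives
  beta_(k+1)(a) = beta_k(a) r_x + r_[a,x] r_x^k + beta_k([a,x]), and [a,x] \<in> A.\<close>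

lemma sum_lessThan_add:
  fixes g :: "nat \<Rightarrow> 'a::comm_monoid_add"
  shows "(\<Sum>i<m + n. g i) = (\<Sum>i<m. g i) + (\<Sum>i<n. g (m + i))"
  by (induction n) (simp_all add: add.assoc)

lemma end_span_base:
  assumes "vector_space sV" and "f \<in> S"
  shows "f \<in> end_span sV S"
  unfolding end_span_def
  by (intro CollectI exI[of _ 1] exI[of _ "\<lambda>_. 1"] exI[of _ "\<lambda>_. f"])
    (simp add: assms vector_space.vector_space_assms(4))

lemma end_span_add:
  assumes "T1 \<in> end_span sV S" and "T2 \<in> end_span sV S"
  shows "(\<lambda>v. T1 v + T2 v) \<in> end_span sV S"
proof -
  obtain n1 :: nat and c1 f1 where 1: "\<forall>i<n1. f1 i \<in> S" "T1 = (\<lambda>v. \<Sum>i<n1. sV (c1 i) (f1 i v))"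
    using assms(1) unfolding end_span_def by blast
  obtain n2 :: nat and c2 f2 where 2: "\<forall>i<n2. f2 i \<in> S" "T2 = (\<lambda>v. \<Sum>i<n2. sV (c2 i) (f2 i v))"
    using assms(2) unfolding end_span_def by blast
  define c where "c i = (if i < n1 then c1 i else c2 (i - n1))" for i
  define f where "f i = (if i < n1 then f1 i else f2 (i - n1))" for i
  have "\<forall>i<n1 + n2. f i \<in> S"
    using 1 2 by (auto simp: f_def)
  moreover have "(\<lambda>v. T1 v + T2 v) = (\<lambda>v. \<Sum>i<n1 + n2. sV (c i) (f i v))"
    unfolding sum_lessThan_add 1 2 by (simp add: c_def f_def)
  ultimately show ?thesis
    unfolding end_span_def by blast
qed

lemma end_span_comp_left:
  assumes "T \<in> end_span sV S" and "\<And>f. f \<in> S \<Longrightarrow> g \<circ> f \<in> S'"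
    and "\<And>u w. g (u + w) = g u + g w" and "\<And>c w. g (sV c w) = sV c (g w)"
  shows "(\<lambda>v. g (T v)) \<in> end_span sV S'"
proof -
  obtain n :: nat and c f where T: "\<forall>i<n. f i \<in> S" "T = (\<lambda>v. \<Sum>i<n. sV (c i) (f i v))"
    using assms(1) unfolding end_span_def by blast
  have "g 0 = 0"
    using assms(3)[of 0 0] by simp
  then have "g (\<Sum>i<n. h i) = (\<Sum>i<n. g (h i))" for h
    using sum_comp_morphism[of g h "{..<n}", OF \<open>g 0 = 0\<close> assms(3)] by (simp add: o_def)
  then have "(\<lambda>v. g (T v)) = (\<lambda>v. \<Sum>i<n. sV (c i) ((g \<circ> f i) v))"
    unfolding T by (simp add: assms(4))
  moreover have "\<forall>i<n. g \<circ> f i \<in> S'"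
    using T assms(2) by blast
  ultimately show ?thesis
    unfolding end_span_def by (intro CollectI exI[of _ n] exI[of _ c] exI[of _ "\<lambda>i. g \<circ> f i"]) simp
qed

lemma rA_power_add:
  assumes "T1 \<in> rA_power sV r A p" and "T2 \<in> rA_power sV r A p"
  shows "(\<lambda>v. T1 v + T2 v) \<in> rA_power sV r A p"
  using assms unfolding rA_power_def by (rule end_span_add)

lemma foldr_comp_replicate: "foldr (\<circ>) (map r (replicate n a)) id = r a ^^ n"
  by (induction n) simp_all

text \<open>r_A r_x^(n-1) + ... + r_A r_x + r_A, the zero space for n = 0.\<close>
definition rA_rx_below :: "('l \<Rightarrow> 'v::ab_group_add \<Rightarrow> 'v) \<Rightarrow> 'l set \<Rightarrow> 'l \<Rightarrow> nat \<Rightarrow> ('v \<Rightarrow> 'v) set" where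
  "rA_rx_below r A x n = {T. \<exists>as. (\<forall>j<n. as j \<in> A) \<and> T = (\<lambda>v. \<Sum>j<n. r (as j) ((r x ^^ j) v))}"

lemma rA_rx_sum_eq_below: "rA_rx_sum r A x k = rA_rx_below r A x (Suc k)"
  unfolding rA_rx_below_def rA_rx_sum_def by (simp add: lessThan_Suc_atMost less_Suc_eq_le)

lemma rA_rx_below_0: "(\<lambda>v. 0) \<in> rA_rx_below r A x 0"
  unfolding rA_rx_below_def by simp

locale right_rep =
  fixes sV :: "'k::field \<Rightarrow> 'v::ab_group_add \<Rightarrow> 'v"
    and br :: "'l::ab_group_add \<Rightarrow> 'l \<Rightarrow> 'l"
    and r :: "'l \<Rightarrow> 'v \<Rightarrow> 'v"
  assumes vector_space: "vector_space sV"
    and r_add_left: "r (a + b) v = r a v + r b v"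
    and r_add: "r y (u + w) = r y u + r y w"
    and r_scale: "r y (sV c w) = sV c (r y w)"
    and r_bracket: "r (br a b) v = r b (r a v) - r a (r b v)"
begin

lemma r_zero_left: "r 0 v = 0"
  using r_add_left[of 0 0 v] by simp

lemma r_diff: "r y (u - w) = r y u - r y w"
  using r_add[of y "u - w" w] by (simp add: algebra_simps)

lemma r_funpow_add: "(r x ^^ n) (u + w) = (r x ^^ n) u + (r x ^^ n) w"
  by (induction n) (simp_all add: r_add)

lemma rA_power_comp_left:
  assumes "T \<in> rA_power sV r A p" and "a \<in> A"
  shows "(\<lambda>v. r a (T v)) \<in> rA_power sV r A (Suc p)"
  using assms(1) unfolding rA_power_def
proof (rule end_span_comp_left)
  fix f assume "f \<in> {foldr (\<circ>) (map r as) id |as. length as = p \<and> set as \<subseteq> A}"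
  then obtain as where "f = foldr (\<circ>) (map r as) id" "length as = p" "set as \<subseteq> A"
    by blast
  then show "r a \<circ> f \<in> {foldr (\<circ>) (map r as) id |as. length as = Suc p \<and> set as \<subseteq> A}"
    using assms(2) by (intro CollectI exI[of _ "a # as"]) simp
qed (simp_all add: r_add r_scale)

lemma rA_power_comp_funpow:
  assumes "b \<in> A" and "a \<in> A"
  shows "(\<lambda>v. r b ((r a ^^ p) v)) \<in> rA_power sV r A (Suc p)"
proof -
  have "foldr (\<circ>) (map r (b # replicate p a)) id
      \<in> {foldr (\<circ>) (map r as) id | as. length as = Suc p \<and> set as \<subseteq> A}"
    using assms by (intro CollectI exI[of _ "b # replicate p a"]) auto
  then have "foldr (\<circ>) (map r (b # replicate p a)) id \<in> rA_power sV r A (Suc p)"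
    unfolding rA_power_def by (rule end_span_base[OF vector_space])
  then show ?thesis
    by (simp only: list.map foldr_Cons foldr_comp_replicate comp_def)
qed

lemma delta_Suc:
  "(r a ^^ Suc (Suc n)) (r x v) - r x ((r a ^^ Suc (Suc n)) v)
     = r a ((r a ^^ Suc n) (r x v) - r x ((r a ^^ Suc n) v)) + r (br x a) ((r a ^^ Suc n) v)"
  by (simp add: r_diff r_bracket)

lemma delta_in_rA_power:
  assumes "br x a \<in> A" and "a \<in> A"
  shows "(\<lambda>v. (r a ^^ Suc n) (r x v) - r x ((r a ^^ Suc n) v)) \<in> rA_power sV r A (Suc n)"
proof (induction n)
  case 0
  have "(\<lambda>v. (r a ^^ Suc 0) (r x v) - r x ((r a ^^ Suc 0) v)) = (\<lambda>v. r (br x a) ((r a ^^ 0) v))"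
    by (simp add: r_bracket)
  then show ?case
    by (simp only: rA_power_comp_funpow[OF assms])
next
  case (Suc n)
  show ?case
    unfolding delta_Suc
    by (rule rA_power_add[OF rA_power_comp_left[OF Suc assms(2)] rA_power_comp_funpow[OF assms]])
qed

end

locale right_rep_subspace = right_rep sV br r
  for sV :: "'k::field \<Rightarrow> 'v::ab_group_add \<Rightarrow> 'v"
    and br :: "'l::ab_group_add \<Rightarrow> 'l \<Rightarrow> 'l"
    and r :: "'l \<Rightarrow> 'v \<Rightarrow> 'v" +
  fixes A :: "'l set"
  assumes zero_in: "0 \<in> A"
    and add_in: "a \<in> A \<Longrightarrow> b \<in> A \<Longrightarrow> a + b \<in> A"
begin

lemma rA_rx_below_add:
  assumes "T1 \<in> rA_rx_below r A x n" and "T2 \<in> rA_rx_below r A x n"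
  shows "(\<lambda>v. T1 v + T2 v) \<in> rA_rx_below r A x n"
proof -
  obtain as1 where 1: "\<forall>j<n. as1 j \<in> A" "T1 = (\<lambda>v. \<Sum>j<n. r (as1 j) ((r x ^^ j) v))"
    using assms(1) unfolding rA_rx_below_def by blast
  obtain as2 where 2: "\<forall>j<n. as2 j \<in> A" "T2 = (\<lambda>v. \<Sum>j<n. r (as2 j) ((r x ^^ j) v))"
    using assms(2) unfolding rA_rx_below_def by blast
  show ?thesis
    unfolding rA_rx_below_def
    by (intro CollectI exI[of _ "\<lambda>j. as1 j + as2 j"] conjI)
      (simp_all add: 1 2 add_in r_add_left sum.distrib)
qed

lemma rA_rx_below_comp_rx:
  assumes "T \<in> rA_rx_below r A x n"
  shows "(\<lambda>v. T (r x v)) \<in> rA_rx_below r A x (Suc n)"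
proof -
  obtain as where T: "\<forall>j<n. as j \<in> A" "T = (\<lambda>v. \<Sum>j<n. r (as j) ((r x ^^ j) v))"
    using assms unfolding rA_rx_below_def by blast
  show ?thesis
    unfolding rA_rx_below_def
  proof (intro CollectI exI[of _ "\<lambda>j. if j = 0 then 0 else as (j - 1)"] conjI)
    show "\<forall>j<Suc n. (if j = 0 then 0 else as (j - 1)) \<in> A"
      using T(1) zero_in by auto
    show "(\<lambda>v. T (r x v)) = (\<lambda>v. \<Sum>j<Suc n. r (if j = 0 then 0 else as (j - 1)) ((r x ^^ j) v))"
      unfolding T(2) sum.lessThan_Suc_shift
      by (simp add: r_zero_left funpow_Suc_right del: funpow.simps)
  qed
qed

lemma rA_rx_below_Suc_mono:
  assumes "T \<in> rA_rx_below r A x n"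
  shows "T \<in> rA_rx_below r A x (Suc n)"
proof -
  obtain as where T: "\<forall>j<n. as j \<in> A" "T = (\<lambda>v. \<Sum>j<n. r (as j) ((r x ^^ j) v))"
    using assms unfolding rA_rx_below_def by blast
  show ?thesis
    unfolding rA_rx_below_def
    by (intro CollectI exI[of _ "\<lambda>j. if j < n then as j else 0"] conjI)
      (use T zero_in in \<open>auto simp: r_zero_left\<close>)
qed

lemma rA_rx_below_top:
  assumes "c \<in> A"
  shows "(\<lambda>v. r c ((r x ^^ n) v)) \<in> rA_rx_below r A x (Suc n)"
  unfolding rA_rx_below_def
  by (intro CollectI exI[of _ "\<lambda>j. if j = n then c else 0"] conjI)
    (use assms zero_in in \<open>auto simp: r_zero_left\<close>)

lemma beta_Suc:
  "(r x ^^ Suc n) (r a v) - r a ((r x ^^ Suc n) v)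
     = ((r x ^^ n) (r a (r x v)) - r a ((r x ^^ n) (r x v)))
       + r (br a x) ((r x ^^ n) v)
       + ((r x ^^ n) (r (br a x) v) - r (br a x) ((r x ^^ n) v))"
proof -
  have "r x (r a v) = r (br a x) v + r a (r x v)"
    by (simp add: r_bracket)
  then have "(r x ^^ Suc n) (r a v) = (r x ^^ n) (r (br a x) v) + (r x ^^ n) (r a (r x v))"
    by (simp only: funpow_Suc_right comp_def r_funpow_add)
  moreover have "(r x ^^ Suc n) v = (r x ^^ n) (r x v)"
    by (simp only: funpow_Suc_right comp_def)
  ultimately show ?thesis
    by (simp only:) (simp add: algebra_simps)
qed

lemma beta_in_rA_rx_below:
  assumes "\<And>a. a \<in> A \<Longrightarrow> br a x \<in> A" and "a \<in> A"
  shows "(\<lambda>v. (r x ^^ n) (r a v) - r a ((r x ^^ n) v)) \<in> rA_rx_below r A x n"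
  using assms(2)
proof (induction n arbitrary: a)
  case 0
  then show ?case
    using rA_rx_below_0 by simp
next
  case (Suc n)
  then have "br a x \<in> A"
    using assms(1) by blast
  then show ?case
    unfolding beta_Suc
    by (intro rA_rx_below_add rA_rx_below_comp_rx rA_rx_below_top rA_rx_below_Suc_mono Suc.IH Suc.prems)
qed

end

theorem lemma2p11:
  fixes sL :: "'k::field_char_0 \<Rightarrow> 'l::ab_group_add \<Rightarrow> 'l"
    and sV :: "'k \<Rightarrow> 'v::ab_group_add \<Rightarrow> 'v"
    and br :: "'l \<Rightarrow> 'l \<Rightarrow> 'l"
    and l r :: "'l \<Rightarrow> 'v \<Rightarrow> 'v"
    and A :: "'l set" and x :: 'l
  assumes "alg_closed_field TYPE('k)"
    and "leibniz_algebra sL br"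
    and "leibniz_rep sL br sV l r"
    and "module.subspace sL A"
    and "x \<in> normalizer br A"
  shows "\<forall>k::nat. \<forall>a\<in>A.
           (\<lambda>v. (r a ^^ (k+1)) (r x v) - r x ((r a ^^ (k+1)) v)) \<in> rA_power sV r A (k+1)
         \<and> (\<lambda>v. (r x ^^ (k+1)) (r a v) - r a ((r x ^^ (k+1)) v)) \<in> rA_rx_sum r A x k"
proof -
  have "module sL"
    using assms(2) unfolding leibniz_algebra_def fd_vector_space_def
    by (simp add: module_iff_vector_space)
  with assms(4) have A: "0 \<in> A" "\<And>a b. a \<in> A \<Longrightarrow> b \<in> A \<Longrightarrow> a + b \<in> A"
    by (simp_all add: module.subspace_def)
  from assms(3) have "right_rep sV br r"
    unfolding leibniz_rep_def fd_vector_space_def right_rep_def Vector_Spaces.linear_iff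
    by auto
  then interpret right_rep_subspace sV br r A
    using A by (simp add: right_rep_subspace_def right_rep_subspace_axioms_def)
  have normalizes: "br x a \<in> A" "br a x \<in> A" if "a \<in> A" for a
    using assms(5) that unfolding normalizer_def by blast+
  show ?thesis
    unfolding Suc_eq_plus1[symmetric] rA_rx_sum_eq_below
    by (intro allI ballI conjI delta_in_rA_power beta_in_rA_rx_below normalizes) assumption+
qed

end
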